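(* Let $0<\alpha<1$ and $p,q>0$. If $G_{\alpha,p}(A,B)\le_\lambda\mathcal{A}_{\alpha,q}(A,B)$ holds for all positive definite $2\times2$ matrices $A,B$, then $p\le q$.
   Context: For positive definite $A,B$: $A\#_\alpha B:=A^{1/2}(A^{-1/2}BA^{-1/2})^\alpha A^{1/2}$, $G_{\alpha,p}(A,B):=(A^p\#_\alpha B^p)^{1/p}$, $\mathcal{A}_{\alpha,q}(A,B):=((1-\alpha)A^q+\alpha B^q)^{1/q}$. For positive semidefinite $n\times n$ matrices $X,Y$ with eigenvalues listed in decreasing order with multiplicities $\lambda_1(\cdot)\ge\dots\ge\lambda_n(\cdot)$, $X\le_\lambda Y$ means $\lambda_i(X)\le\lambda_i(Y)$ for all $i$. *)

theory Defs
  imports "Jordan_Normal_Form.Char_Poly"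
begin

definition cadj :: "complex mat \<Rightarrow> complex mat" where
  "cadj A = mat (dim_col A) (dim_row A) (\<lambda>(i,j). cnj (A $$ (j,i)))"

definition hermitian :: "nat \<Rightarrow> complex mat \<Rightarrow> bool" where
  "hermitian n A \<longleftrightarrow> A \<in> carrier_mat n n \<and> cadj A = A"

definition posdef :: "nat \<Rightarrow> complex mat \<Rightarrow> bool" where
  "posdef n A \<longleftrightarrow> hermitian n A \<and>
     (\<forall>v \<in> carrier_vec n. v \<noteq> 0\<^sub>v n \<longrightarrow> 0 < Re (map_vec cnj v \<bullet> (A *\<^sub>v v)))"

definition unitary :: "nat \<Rightarrow> complex mat \<Rightarrow> bool" where
  "unitary n U \<longleftrightarrow> U \<in> carrier_mat n n \<and> U * cadj U = 1\<^sub>m n"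

definition rdiag :: "nat \<Rightarrow> (nat \<Rightarrow> real) \<Rightarrow> complex mat" where
  "rdiag n d = mat n n (\<lambda>(i,j). if i = j then complex_of_real (d i) else 0)"

definition mpow :: "nat \<Rightarrow> complex mat \<Rightarrow> real \<Rightarrow> complex mat" where
  "mpow n A t = (SOME B. \<exists>U d. unitary n U \<and> (\<forall>i<n. 0 < d i) \<and>
       A = U * rdiag n d * cadj U \<and> B = U * rdiag n (\<lambda>i. d i powr t) * cadj U)"

definition gmean :: "nat \<Rightarrow> real \<Rightarrow> complex mat \<Rightarrow> complex mat \<Rightarrow> complex mat" where
  "gmean n \<alpha> A B = mpow n A (1/2) * mpow n (mpow n A (-1/2) * B * mpow n A (-1/2)) \<alpha> * mpow n A (1/2)"

definition G_ap :: "nat \<Rightarrow> real \<Rightarrow> real \<Rightarrow> complex mat \<Rightarrow> complex mat \<Rightarrow> complex mat" where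
  "G_ap n \<alpha> p A B = mpow n (gmean n \<alpha> (mpow n A p) (mpow n B p)) (1/p)"

definition A_aq :: "nat \<Rightarrow> real \<Rightarrow> real \<Rightarrow> complex mat \<Rightarrow> complex mat \<Rightarrow> complex mat" where
  "A_aq n \<alpha> q A B = mpow n (complex_of_real (1 - \<alpha>) \<cdot>\<^sub>m mpow n A q + complex_of_real \<alpha> \<cdot>\<^sub>m mpow n B q) (1/q)"

definition eigs :: "nat \<Rightarrow> complex mat \<Rightarrow> real list" where
  "eigs n X = (SOME ls. length ls = n \<and> sorted_wrt (\<ge>) ls \<and>
      char_poly X = (\<Prod>a\<leftarrow>ls. [:- complex_of_real a, 1:]))"

definition eig_le :: "nat \<Rightarrow> complex mat \<Rightarrow> complex mat \<Rightarrow> bool" where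
  "eig_le n X Y \<longleftrightarrow> (\<forall>i<n. eigs n X ! i \<le> eigs n Y ! i)"

end

theory Submission
  imports Defs "HOL-Real_Asymp.Real_Asymp"
begin

text \<open>
  Suppose \<open>q < p\<close>. Let \<open>A = diag(P, 1/P)\<close> with \<open>P = N powr (1/p)\<close>, and let \<open>B\<close> be
  \<open>A\<close> conjugated by the rotation with sine \<open>2N / (N\<^sup>2 - 1)\<close>. This angle makes
  \<open>A^(-p/2) B^p A^(-p/2)\<close> have the eigenvalues \<open>(1 + sqrt 2)\<^sup>2\<close> and \<open>(1 + sqrt 2)\<^sup>-\<^sup>2\<close> for
  every \<open>N\<close>. A function of a Hermitian 2x2 matrix is affine in the matrix, so
  \<open>A^p #\<^sub>\<alpha> B^p = \<beta> B^p + \<gamma> A^p\<close>: a matrix with determinant 1 and trace \<open>c (N + 1/N)\<close>.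
  Here \<open>c = \<beta> + \<gamma> < 1\<close> is the value at 1 of the chord of \<open>t powr \<alpha>\<close> through the two
  eigenvalues. Hence the smaller eigenvalue of \<open>G\<^sub>\<alpha>\<^sub>,\<^sub>p(A,B)\<close> is roughly at least
  \<open>(c N) powr (-1/p)\<close>. The smaller eigenvalue of \<open>(1-\<alpha>) A^q + \<alpha> B^q\<close> is at most its
  determinant divided by its upper left entry. Because \<open>q < p\<close>, this is roughly
  \<open>N powr (-q/p)\<close>, so the smaller eigenvalue of \<open>\<A>\<^sub>\<alpha>\<^sub>,\<^sub>q(A,B)\<close> is roughly at most
  \<open>N powr (-1/p)\<close>. Since \<open>c < 1\<close>, this contradicts
  \<open>G\<^sub>\<alpha>\<^sub>,\<^sub>p(A,B) \<le>\<^sub>\<lambda> \<A>\<^sub>\<alpha>\<^sub>,\<^sub>q(A,B)\<close> once \<open>N\<close> is large.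
\<close>

section \<open>Unitary conjugates of diagonal matrices\<close>

lemma rdiag_carrier [simp]: "rdiag n d \<in> carrier_mat n n"
  by (simp add: rdiag_def)

lemma cadj_carrier: "U \<in> carrier_mat n n \<Longrightarrow> cadj U \<in> carrier_mat n n"
  by (auto simp: cadj_def)

lemma unitary_cadj_mult:
  assumes "unitary n U"
  shows "cadj U * U = 1\<^sub>m n"
  using assms mat_mult_left_right_inverse[OF _ cadj_carrier] by (auto simp: unitary_def)

lemma char_poly_unitary_conj:
  assumes "unitary n U"
  shows "char_poly (U * rdiag n d * cadj U) = (\<Prod>i\<leftarrow>[0..<n]. [:- complex_of_real (d i), 1:])"
proof -
  have U: "U \<in> carrier_mat n n" using assms by (simp add: unitary_def)
  have "similar_mat (U * rdiag n d * cadj U) (rdiag n d)"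
    using assms unitary_cadj_mult[OF assms] U cadj_carrier[OF U]
    by (intro similar_matI[of _ _ _ _ n]) (auto simp: unitary_def)
  then have "char_poly (U * rdiag n d * cadj U) = char_poly (rdiag n d)"
    by (rule char_poly_similar)
  moreover have "upper_triangular (rdiag n d)"
    by (simp add: upper_triangular_def rdiag_def)
  then have "char_poly (rdiag n d) = (\<Prod>a\<leftarrow>diag_mat (rdiag n d). [:- a, 1:])"
    by (rule char_poly_upper_triangular[OF rdiag_carrier])
  moreover have "diag_mat (rdiag n d) = map (\<lambda>i. complex_of_real (d i)) [0..<n]"
    by (simp add: diag_mat_def rdiag_def)
  ultimately show ?thesis
    by (simp add: o_def)
qed

lemma unitary_conj_diag_eigenvalue:
  assumes "unitary n U" "unitary n V" "U * rdiag n d * cadj U = V * rdiag n e * cadj V" "i < n"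
  shows "\<exists>j<n. e i = d j"
proof -
  let ?x = "complex_of_real (e i)"
  have "poly (char_poly (V * rdiag n e * cadj V)) ?x = 0"
    using assms(4) by (auto simp: char_poly_unitary_conj[OF assms(2)] poly_prod_list prod_list_zero_iff)
  then have "poly (\<Prod>j\<leftarrow>[0..<n]. [:- complex_of_real (d j), 1:]) ?x = 0"
    by (simp only: assms(3)[symmetric] char_poly_unitary_conj[OF assms(1)])
  then show ?thesis by (auto simp: poly_prod_list prod_list_zero_iff)
qed

lemma unitary_conj_affine:
  assumes "unitary n U" "\<And>i. i < n \<Longrightarrow> f i = \<beta> * d i + \<gamma>"
  shows "U * rdiag n f * cadj U
    = complex_of_real \<beta> \<cdot>\<^sub>m (U * rdiag n d * cadj U) + complex_of_real \<gamma> \<cdot>\<^sub>m 1\<^sub>m n"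
proof -
  have U: "U \<in> carrier_mat n n" and UU: "U * cadj U = 1\<^sub>m n" using assms(1) by (auto simp: unitary_def)
  note cU = cadj_carrier[OF U]
  have f: "rdiag n f = complex_of_real \<beta> \<cdot>\<^sub>m rdiag n d + complex_of_real \<gamma> \<cdot>\<^sub>m 1\<^sub>m n"
    using assms(2) by (intro eq_matI) (auto simp: rdiag_def)
  have "U * rdiag n f = U * (complex_of_real \<beta> \<cdot>\<^sub>m rdiag n d) + U * (complex_of_real \<gamma> \<cdot>\<^sub>m 1\<^sub>m n)"
    unfolding f by (rule mult_add_distrib_mat[OF U]) auto
  also have "\<dots> = complex_of_real \<beta> \<cdot>\<^sub>m (U * rdiag n d) + complex_of_real \<gamma> \<cdot>\<^sub>m U"
    using U by (simp add: mult_smult_distrib[OF U rdiag_carrier] mult_smult_distrib[OF U one_carrier_mat])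
  finally have "U * rdiag n f = complex_of_real \<beta> \<cdot>\<^sub>m (U * rdiag n d) + complex_of_real \<gamma> \<cdot>\<^sub>m U" .
  then have "U * rdiag n f * cadj U
      = complex_of_real \<beta> \<cdot>\<^sub>m (U * rdiag n d * cadj U) + complex_of_real \<gamma> \<cdot>\<^sub>m (U * cadj U)"
    using U cU by (simp add: add_mult_distrib_mat[of _ n n] mult_smult_assoc_mat[of _ n n])
  then show ?thesis unfolding UU .
qed

section \<open>Matrix powers and eigenvalues in dimension two\<close>

lemma less_two_iff: "(i::nat) < 2 \<longleftrightarrow> i = 0 \<or> i = 1"
  by auto

lemma affine_interpolant_exists: "\<exists>\<beta> \<gamma>. f u = \<beta> * u + \<gamma> \<and> f v = \<beta> * v + \<gamma>"
  for f :: "real \<Rightarrow> real"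
proof (cases "u = v")
  case True
  then show ?thesis by (intro exI[of _ 0] exI[of _ "f u"]) simp
next
  case False
  define \<beta> where "\<beta> = (f u - f v) / (u - v)"
  have "\<beta> * (u - v) = f u - f v" using False unfolding \<beta>_def by simp
  then show ?thesis by (intro exI[of _ \<beta>] exI[of _ "f u - \<beta> * u"]) (simp add: algebra_simps)
qed

lemma affine_interpolant_eval:
  fixes \<beta> \<gamma> u v z :: real
  assumes "f u = \<beta> * u + \<gamma>" "f v = \<beta> * v + \<gamma>" "u \<noteq> v"
  shows "\<beta> * z + \<gamma> = (f u - f v) / (u - v) * (z - u) + f u"
proof -
  have "\<beta> = (f u - f v) / (u - v)" using assms by (simp add: field_simps)
  then show ?thesis using assms(1) by (simp add: algebra_simps)
qed

text \<open>\<^const>\<open>mpow\<close> chooses some spectral decomposition. In dimension 2 all choices agree: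
  on the at most two eigenvalues, \<open>t powr s\<close> coincides with an affine function of \<open>t\<close>.\<close>
lemma mpow_unitary_conj:
  assumes U: "unitary 2 U" and d: "\<And>i. i < 2 \<Longrightarrow> 0 < d i" and M: "M = U * rdiag 2 d * cadj U"
  shows "mpow 2 M t = U * rdiag 2 (\<lambda>i. d i powr t) * cadj U"
proof -
  let ?P = "\<lambda>B. \<exists>U d. unitary 2 U \<and> (\<forall>i<2. 0 < d i) \<and> M = U * rdiag 2 d * cadj U
    \<and> B = U * rdiag 2 (\<lambda>i. d i powr t) * cadj U"
  have "?P (mpow 2 M t)" unfolding mpow_def by (rule someI_ex) (use U d M in blast)
  then obtain V e where V: "unitary 2 V" and Me: "M = V * rdiag 2 e * cadj V"
    and B: "mpow 2 M t = V * rdiag 2 (\<lambda>i. e i powr t) * cadj V" by blast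
  obtain \<beta> \<gamma> where bg: "d 0 powr t = \<beta> * d 0 + \<gamma>" "d 1 powr t = \<beta> * d 1 + \<gamma>"
    using affine_interpolant_exists[of "\<lambda>x. x powr t" "d 0" "d 1"] by blast
  have fd: "d i powr t = \<beta> * d i + \<gamma>" if "i < 2" for i
    using bg that by (auto simp: less_two_iff)
  have fe: "e i powr t = \<beta> * e i + \<gamma>" if "i < 2" for i
    using unitary_conj_diag_eigenvalue[OF U V M[symmetric, unfolded Me] that] fd by auto
  show ?thesis
    using unitary_conj_affine[OF V fe] unitary_conj_affine[OF U fd] B Me M by simp
qed

lemma eigs_2I:
  assumes cp: "char_poly X = (\<Prod>a\<leftarrow>[l1, l2]. [:- complex_of_real a, 1:])" and l: "l2 \<le> l1"
  shows "eigs 2 X = [l1, l2]"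
proof -
  have prod2: "(\<Prod>a\<leftarrow>[x, y]. [:- complex_of_real a, 1:])
      = [:complex_of_real (x * y), - complex_of_real (x + y), 1:]" for x y
    by (simp add: mult_pCons_left smult_add_left algebra_simps del: pCons_0_as_mult)
  let ?Q = "\<lambda>ls. length ls = 2 \<and> sorted_wrt (\<ge>) ls \<and> char_poly X = (\<Prod>a\<leftarrow>ls. [:- complex_of_real a, 1:])"
  have uniq: "ls = [l1, l2]" if "?Q ls" for ls
  proof -
    have "\<exists>x y. ls = [x, y]"
      using that by (auto simp: numeral_2_eq_2 length_Suc_conv)
    then obtain x y where ls: "ls = [x, y]" by blast
    have "[:complex_of_real (x * y), - complex_of_real (x + y), 1:]
        = [:complex_of_real (l1 * l2), - complex_of_real (l1 + l2), 1:]"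
      using that ls cp prod2 by metis
    then have "complex_of_real (x * y) = complex_of_real (l1 * l2)"
      and "complex_of_real (x + y) = complex_of_real (l1 + l2)"
      by (simp_all only: pCons_eq_iff neg_equal_iff_equal)
    then have prod: "x * y = l1 * l2" and sum: "x + y = l1 + l2"
      by (simp_all only: of_real_eq_iff)
    have "(x - l1) * (x - l2) = x * x - (l1 + l2) * x + l1 * l2"
      by (simp add: algebra_simps)
    also have "\<dots> = 0"
      unfolding sum[symmetric] prod[symmetric] by (simp add: algebra_simps)
    finally have "(x - l1) * (x - l2) = 0" .
    then show ?thesis using sum that ls l by auto
  qed
  show ?thesis unfolding eigs_def using cp l uniq by (intro some_equality) auto
qed

lemma eigs_unitary_conj_2:
  assumes "unitary 2 U" "d 1 \<le> d 0"
  shows "eigs 2 (U * rdiag 2 d * cadj U) = [d 0, d 1]"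
  using assms by (intro eigs_2I) (simp_all add: char_poly_unitary_conj numeral_2_eq_2)

section \<open>Real symmetric 2x2 matrices\<close>

definition mat2 :: "'a \<Rightarrow> 'a \<Rightarrow> 'a \<Rightarrow> 'a \<Rightarrow> 'a mat" where
  "mat2 a b c d = mat 2 2 (\<lambda>(i,j). if i = 0 then (if j = 0 then a else b) else (if j = 0 then c else d))"

lemma mat2_carrier [simp]: "mat2 a b c d \<in> carrier_mat 2 2"
  and dim_row_mat2 [simp]: "dim_row (mat2 a b c d) = 2"
  and dim_col_mat2 [simp]: "dim_col (mat2 a b c d) = 2"
  by (auto simp: mat2_def)

lemma index_mat2 [simp]:
  "mat2 a b c d $$ (0,0) = a" "mat2 a b c d $$ (0,1) = b"
  "mat2 a b c d $$ (1,0) = c" "mat2 a b c d $$ (1,1) = d"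
  "mat2 a b c d $$ (0,Suc 0) = b" "mat2 a b c d $$ (Suc 0,0) = c" "mat2 a b c d $$ (Suc 0,Suc 0) = d"
  by (auto simp: mat2_def)

lemma mat2_eq_iff: "mat2 a b c d = mat2 a' b' c' d' \<longleftrightarrow> a = a' \<and> b = b' \<and> c = c' \<and> d = d'"
  by (metis index_mat2)

lemma mat2_mult [simp]:
  "mat2 a b c d * mat2 e f g h = mat2 (a*e + b*g) (a*f + b*h) (c*e + d*g) (c*f + d*h)"
  for a b c d e f g h :: "'a::comm_semiring_0"
  by (rule eq_matI) (auto simp: mat2_def less_two_iff scalar_prod_def numeral_2_eq_2 col_def row_def)

lemma mat2_add [simp]: "mat2 a b c d + mat2 e f g h = mat2 (a+e) (b+f) (c+g) (d+h)"
  by (rule eq_matI) (auto simp: mat2_def less_two_iff)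

lemma mat2_smult [simp]: "x \<cdot>\<^sub>m mat2 a b c d = mat2 (x*a) (x*b) (x*c) (x*d)"
  by (rule eq_matI) (auto simp: mat2_def less_two_iff)

lemma one_mat_2: "1\<^sub>m 2 = mat2 1 0 0 1"
  by (rule eq_matI) (auto simp: mat2_def less_two_iff)

lemma cadj_mat2 [simp]: "cadj (mat2 a b c d) = mat2 (cnj a) (cnj c) (cnj b) (cnj d)"
  unfolding cadj_def by (rule eq_matI) (auto simp: mat2_def less_two_iff)

lemma rdiag_2: "rdiag 2 d = mat2 (complex_of_real (d 0)) 0 0 (complex_of_real (d 1))"
  unfolding rdiag_def by (rule eq_matI) (auto simp: mat2_def less_two_iff)

definition sym2 :: "real \<Rightarrow> real \<Rightarrow> real \<Rightarrow> complex mat" where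
  "sym2 a b c = mat2 (of_real a) (of_real b) (of_real b) (of_real c)"

definition rot :: "real \<Rightarrow> real \<Rightarrow> complex mat" where
  "rot x y = mat2 (of_real x) (of_real (- y)) (of_real y) (of_real x)"

definition rot_diag :: "real \<Rightarrow> real \<Rightarrow> real \<Rightarrow> real \<Rightarrow> complex mat" where
  "rot_diag x y u v = rot x y * rdiag 2 (\<lambda>i. if i = 0 then u else v) * cadj (rot x y)"

lemma unitary_rot:
  assumes "x\<^sup>2 + y\<^sup>2 = 1"
  shows "unitary 2 (rot x y)"
proof -
  have "complex_of_real x * complex_of_real x + complex_of_real y * complex_of_real y = 1"
    using assms by (metis of_real_1 of_real_add of_real_mult power2_eq_square)
  then show ?thesis unfolding unitary_def rot_def by (simp add: one_mat_2 mat2_eq_iff algebra_simps)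
qed

lemma rot_diag_eq_sym2:
  "rot_diag x y u v = sym2 (x\<^sup>2 * u + y\<^sup>2 * v) (x * y * (u - v)) (y\<^sup>2 * u + x\<^sup>2 * v)"
  unfolding rot_diag_def rot_def sym2_def rdiag_2 by (simp add: mat2_eq_iff algebra_simps power2_eq_square)

lemma sym2_eq_rot_diag_one: "sym2 u 0 v = rot_diag 1 0 u v"
  unfolding rot_diag_eq_sym2 by simp

lemma sym2_add_smult:
  "complex_of_real s \<cdot>\<^sub>m sym2 a b c + complex_of_real t \<cdot>\<^sub>m sym2 a' b' c'
    = sym2 (s * a + t * a') (s * b + t * b') (s * c + t * c')"
  unfolding sym2_def by simp

lemma sym2_affine:
  "complex_of_real \<beta> \<cdot>\<^sub>m sym2 a b c + complex_of_real \<gamma> \<cdot>\<^sub>m 1\<^sub>m 2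
    = sym2 (\<beta> * a + \<gamma>) (\<beta> * b) (\<beta> * c + \<gamma>)"
  unfolding sym2_def one_mat_2 by simp

lemma sym2_congruence_diag:
  "sym2 u 0 v * sym2 a b c * sym2 u 0 v = sym2 (u * u * a) (u * v * b) (v * v * c)"
  unfolding sym2_def by (simp add: algebra_simps)

lemma rot_diag_trace_det:
  fixes x y u v :: real
  assumes "x\<^sup>2 + y\<^sup>2 = 1"
  shows "(x\<^sup>2 * u + y\<^sup>2 * v) + (y\<^sup>2 * u + x\<^sup>2 * v) = u + v"
    and "(x\<^sup>2 * u + y\<^sup>2 * v) * (y\<^sup>2 * u + x\<^sup>2 * v) - (x * y * (u - v))\<^sup>2 = u * v"
proof -
  show "(x\<^sup>2 * u + y\<^sup>2 * v) + (y\<^sup>2 * u + x\<^sup>2 * v) = u + v"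
    using assms by (simp add: algebra_simps flip: distrib_left)
  have "(x\<^sup>2 * u + y\<^sup>2 * v) * (y\<^sup>2 * u + x\<^sup>2 * v) - (x * y * (u - v))\<^sup>2 = u * v * (x\<^sup>2 + y\<^sup>2)\<^sup>2"
    by (simp add: power2_eq_square algebra_simps)
  then show "(x\<^sup>2 * u + y\<^sup>2 * v) * (y\<^sup>2 * u + x\<^sup>2 * v) - (x * y * (u - v))\<^sup>2 = u * v"
    using assms by simp
qed

lemma rot_diag_posdef_entries:
  fixes x y u v :: real
  assumes xy: "x\<^sup>2 + y\<^sup>2 = 1" and u: "0 < u" and v: "0 < v"
  shows "0 < x\<^sup>2 * u + y\<^sup>2 * v"
    and "(x * y * (u - v))\<^sup>2 < (x\<^sup>2 * u + y\<^sup>2 * v) * (y\<^sup>2 * u + x\<^sup>2 * v)"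
proof -
  show "0 < x\<^sup>2 * u + y\<^sup>2 * v"
  proof (cases "x = 0")
    case True
    then show ?thesis using xy v by simp
  next
    case False
    then show ?thesis using u v by (simp add: add_pos_nonneg)
  qed
  show "(x * y * (u - v))\<^sup>2 < (x\<^sup>2 * u + y\<^sup>2 * v) * (y\<^sup>2 * u + x\<^sup>2 * v)"
    using rot_diag_trace_det(2)[OF xy, of u v] mult_pos_pos[OF u v] by linarith
qed

lemma posdef_sym2:
  assumes a: "0 < a" and d: "b\<^sup>2 < a * c"
  shows "posdef 2 (sym2 a b c)"
  unfolding posdef_def
proof (intro conjI ballI impI)
  show "hermitian 2 (sym2 a b c)" unfolding hermitian_def sym2_def by simp
  fix v :: "complex vec"
  assume v: "v \<in> carrier_vec 2" "v \<noteq> 0\<^sub>v 2"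
  define x where "x = v $ 0"
  define y where "y = v $ 1"
  have ne: "x \<noteq> 0 \<or> y \<noteq> 0"
  proof (rule ccontr)
    assume "\<not> (x \<noteq> 0 \<or> y \<noteq> 0)"
    then have "v = 0\<^sub>v 2" using v(1) unfolding x_def y_def by (intro eq_vecI) (auto simp: less_two_iff)
    then show False using v(2) by simp
  qed
  define Q where
    "Q = a * ((Re x)\<^sup>2 + (Im x)\<^sup>2) + 2 * b * (Re x * Re y + Im x * Im y) + c * ((Re y)\<^sup>2 + (Im y)\<^sup>2)"
  have form: "Re (map_vec cnj v \<bullet> (sym2 a b c *\<^sub>v v)) = Q"
    using v(1) unfolding x_def y_def sym2_def Q_def
    by (simp add: scalar_prod_def mult_mat_vec_def numeral_2_eq_2 row_def mat2_def
        power2_eq_square algebra_simps)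
  \<comment> \<open>completing the square\<close>
  have aQ: "a * Q = (a * Re x + b * Re y)\<^sup>2 + (a * Im x + b * Im y)\<^sup>2
      + (a * c - b\<^sup>2) * ((Re y)\<^sup>2 + (Im y)\<^sup>2)"
    unfolding Q_def by (simp add: algebra_simps power2_eq_square)
  have "0 < a * Q"
  proof (cases "y = 0")
    case True
    then have "0 < (Re x)\<^sup>2 + (Im x)\<^sup>2"
      using ne complex_eq_iff[of x 0] by (auto simp: add_pos_nonneg add_nonneg_pos)
    then have "0 < (a * Re x)\<^sup>2 + (a * Im x)\<^sup>2"
      using a by (simp add: power_mult_distrib flip: distrib_left)
    then show ?thesis unfolding aQ using True by simp
  next
    case False
    then have "0 < (Re y)\<^sup>2 + (Im y)\<^sup>2"
      using complex_eq_iff[of y 0] by (auto simp: add_pos_nonneg add_nonneg_pos)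
    then have "0 < (a * c - b\<^sup>2) * ((Re y)\<^sup>2 + (Im y)\<^sup>2)" using d by simp
    then show ?thesis unfolding aQ by (simp add: add_nonneg_pos)
  qed
  then show "0 < Re (map_vec cnj v \<bullet> (sym2 a b c *\<^sub>v v))"
    unfolding form using a by (simp add: zero_less_mult_iff)
qed

lemma posdef_rot_diag:
  assumes "x\<^sup>2 + y\<^sup>2 = 1" "0 < u" "0 < v"
  shows "posdef 2 (rot_diag x y u v)"
  unfolding rot_diag_eq_sym2 using rot_diag_posdef_entries[OF assms] by (rule posdef_sym2)

lemma mpow_rot_diag:
  assumes "x\<^sup>2 + y\<^sup>2 = 1" "0 < u" "0 < v"
  shows "mpow 2 (rot_diag x y u v) t = rot_diag x y (u powr t) (v powr t)"
proof -
  have "mpow 2 (rot_diag x y u v) t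
      = rot x y * rdiag 2 (\<lambda>i. (if i = 0 then u else v) powr t) * cadj (rot x y)"
    using assms by (intro mpow_unitary_conj unitary_rot) (auto simp: rot_diag_def)
  also have "(\<lambda>i. (if i = 0 then u else v) powr t) = (\<lambda>i. if i = 0 then u powr t else v powr t)"
    by auto
  finally show ?thesis unfolding rot_diag_def .
qed

lemma mpow_sym2_diag:
  assumes "0 < u" "0 < v"
  shows "mpow 2 (sym2 u 0 v) t = sym2 (u powr t) 0 (v powr t)"
  using mpow_rot_diag[of 1 0 u v t] assms by (simp add: sym2_eq_rot_diag_one)

lemma eigs_rot_diag:
  assumes "x\<^sup>2 + y\<^sup>2 = 1" "v \<le> u"
  shows "eigs 2 (rot_diag x y u v) = [u, v]"
  using eigs_unitary_conj_2[OF unitary_rot[OF assms(1)], of "\<lambda>i. if i = 0 then u else v"] assms(2)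
  by (simp add: rot_diag_def)

definition eig_max :: "real \<Rightarrow> real \<Rightarrow> real \<Rightarrow> real" where
  "eig_max a b c = (a + c) / 2 + sqrt (((a - c) / 2)\<^sup>2 + b\<^sup>2)"

definition eig_min :: "real \<Rightarrow> real \<Rightarrow> real \<Rightarrow> real" where
  "eig_min a b c = (a + c) / 2 - sqrt (((a - c) / 2)\<^sup>2 + b\<^sup>2)"

lemma eig_min_le_max: "eig_min a b c \<le> eig_max a b c"
  by (simp add: eig_max_def eig_min_def)

lemma eig_max_plus_min: "eig_max a b c + eig_min a b c = a + c"
  by (simp add: eig_max_def eig_min_def)

lemma eig_max_times_min: "eig_max a b c * eig_min a b c = a * c - b\<^sup>2"
proof -
  have "eig_max a b c * eig_min a b c = ((a + c) / 2)\<^sup>2 - (sqrt (((a - c) / 2)\<^sup>2 + b\<^sup>2))\<^sup>2"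
    unfolding eig_max_def eig_min_def by (simp add: power2_eq_square algebra_simps)
  also have "\<dots> = ((a + c) / 2)\<^sup>2 - (((a - c) / 2)\<^sup>2 + b\<^sup>2)"
    by simp
  finally show ?thesis by (simp add: power2_eq_square field_simps)
qed

lemma eig_max_ge: "a \<le> eig_max a b c"
proof -
  have "\<bar>a - c\<bar> / 2 \<le> sqrt (((a - c) / 2)\<^sup>2 + b\<^sup>2)"
    by (rule real_le_rsqrt) (simp add: power_divide)
  moreover have "(a - c) / 2 \<le> \<bar>a - c\<bar> / 2"
    by (intro divide_right_mono abs_ge_self) simp
  ultimately have "(a - c) / 2 \<le> sqrt (((a - c) / 2)\<^sup>2 + b\<^sup>2)"
    by (rule order_trans[rotated])
  then show ?thesis unfolding eig_max_def by (simp add: field_simps)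
qed

lemma eig_max_secular: "(eig_max a b c - a) * (eig_max a b c - c) = b\<^sup>2"
proof -
  have "(eig_max a b c - a) * (eig_max a b c - c) = (sqrt (((a - c) / 2)\<^sup>2 + b\<^sup>2))\<^sup>2 - ((a - c) / 2)\<^sup>2"
    unfolding eig_max_def by (simp add: power2_eq_square field_simps)
  then show ?thesis by simp
qed

lemma eig_min_pos:
  assumes "0 < a" "b\<^sup>2 < a * c"
  shows "0 < eig_min a b c"
proof -
  have "0 < eig_max a b c" using eig_max_ge[of a b c] assms(1) by linarith
  moreover have "0 < eig_max a b c * eig_min a b c" using assms(2) by (simp add: eig_max_times_min)
  ultimately show ?thesis by (simp add: zero_less_mult_iff)
qed

lemma eig_min_le:
  assumes "0 < a" "b\<^sup>2 < a * c"
  shows "eig_min a b c \<le> (a * c - b\<^sup>2) / a"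
proof -
  have "eig_min a b c * a \<le> eig_min a b c * eig_max a b c"
    using eig_min_pos[OF assms] eig_max_ge by (simp add: mult_left_mono)
  then show ?thesis using assms(1) by (simp add: le_divide_eq eig_max_times_min mult.commute)
qed

lemma eig_min_ge:
  assumes "0 < a" "b\<^sup>2 < a * c"
  shows "(a * c - b\<^sup>2) / (a + c) \<le> eig_min a b c"
proof -
  have "eig_max a b c \<le> a + c" using eig_min_pos[OF assms] eig_max_plus_min[of a b c] by linarith
  then have "eig_min a b c * eig_max a b c \<le> eig_min a b c * (a + c)"
    using eig_min_pos[OF assms] by (simp add: mult_left_mono)
  moreover have "0 < a + c" using eig_min_pos[OF assms] eig_min_le_max[of a b c] eig_max_plus_min[of a b c]
    by linarith
  ultimately show ?thesis by (simp add: divide_le_eq eig_max_times_min mult.commute)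
qed

lemma eig_min_le_of_bounds:
  assumes "0 < m" "m \<le> a" "b\<^sup>2 < a * c" "a * c - b\<^sup>2 \<le> D"
  shows "eig_min a b c \<le> D / m"
proof -
  have a: "0 < a" using assms(1,2) by linarith
  have "eig_min a b c \<le> (a * c - b\<^sup>2) / a" by (rule eig_min_le[OF a assms(3)])
  also have "\<dots> \<le> D / a" using a assms(4) by (simp add: divide_right_mono)
  also have "\<dots> \<le> D / m" using assms eig_max_times_min[of a b c] eig_min_pos[OF a assms(3)]
    by (intro divide_left_mono) auto
  finally show ?thesis .
qed

lemma sym2_eq_rot_diag_eigvec:
  assumes xy: "x\<^sup>2 + y\<^sup>2 = 1" and ev: "a * x + b * y = l * x" "b * x + c * y = l * y"
  shows "sym2 a b c = rot_diag x y l (a + c - l)"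
proof -
  have e1: "x\<^sup>2 * l + y\<^sup>2 * (a + c - l) = a * (x\<^sup>2 + y\<^sup>2)"
  proof -
    have "x\<^sup>2 * l = x * (l * x)" "y\<^sup>2 * l = y * (l * y)" by (simp_all add: power2_eq_square)
    then show ?thesis unfolding ev[symmetric] by (simp add: power2_eq_square algebra_simps)
  qed
  have e2: "x * y * (l - (a + c - l)) = b * (x\<^sup>2 + y\<^sup>2)"
  proof -
    have "x * y * l = y * (l * x)" "x * y * l = x * (l * y)" by simp_all
    then have "2 * (x * y * l) = y * (a * x + b * y) + x * (b * x + c * y)" unfolding ev by simp
    then show ?thesis by (simp add: power2_eq_square algebra_simps)
  qed
  have e3: "y\<^sup>2 * l + x\<^sup>2 * (a + c - l) = c * (x\<^sup>2 + y\<^sup>2)"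
    using e1 by (simp add: algebra_simps)
  show ?thesis using e1 e2 e3 unfolding rot_diag_eq_sym2 xy by simp
qed

lemma sym2_spectral:
  obtains x y where "x\<^sup>2 + y\<^sup>2 = 1" "sym2 a b c = rot_diag x y (eig_max a b c) (eig_min a b c)"
proof -
  let ?l = "eig_max a b c"
  have min: "eig_min a b c = a + c - ?l" using eig_max_plus_min[of a b c] by simp
  show ?thesis
  proof (cases "b = 0 \<and> ?l = a")
    case True
    then have hb: "b = 0" and hl: "?l = a" by blast+
    have "sym2 a b c = rot_diag 1 0 ?l (a + c - ?l)"
      by (rule sym2_eq_rot_diag_eigvec) (unfold hl, simp_all add: hb)
    then show ?thesis using that[of 1 0] min by simp
  next
    case False
    \<comment> \<open>then \<open>(b, l - a)\<close> is a nonzero eigenvector for \<open>l\<close>\<close>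
    define n where "n = sqrt (b\<^sup>2 + (?l - a)\<^sup>2)"
    have pos: "0 < b\<^sup>2 + (?l - a)\<^sup>2" using False by (simp add: sum_power2_gt_zero_iff)
    then have n: "0 < n" "n\<^sup>2 = b\<^sup>2 + (?l - a)\<^sup>2" unfolding n_def by simp_all
    have "(b / n)\<^sup>2 + ((?l - a) / n)\<^sup>2 = (b\<^sup>2 + (?l - a)\<^sup>2) / n\<^sup>2"
      by (simp add: power_divide add_divide_distrib)
    also have "\<dots> = 1"
      unfolding n(2) by (rule divide_self) (use pos in linarith)
    finally have "(b / n)\<^sup>2 + ((?l - a) / n)\<^sup>2 = 1" .
    moreover have "a * (b / n) + b * ((?l - a) / n) = ?l * (b / n)"
      using n(1) by (simp add: field_simps)
    moreover have "b * (b / n) + c * ((?l - a) / n) = ?l * ((?l - a) / n)"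
      using eig_max_secular[of a b c] n(1) by (simp add: field_simps power2_eq_square)
    ultimately show ?thesis using that sym2_eq_rot_diag_eigvec min by metis
  qed
qed

lemma mpow_sym2_affine:
  assumes "0 < a" "b\<^sup>2 < a * c"
  obtains \<beta> \<gamma> where "mpow 2 (sym2 a b c) t = sym2 (\<beta> * a + \<gamma>) (\<beta> * b) (\<beta> * c + \<gamma>)"
    "eig_max a b c powr t = \<beta> * eig_max a b c + \<gamma>" "eig_min a b c powr t = \<beta> * eig_min a b c + \<gamma>"
proof -
  obtain x y where xy: "x\<^sup>2 + y\<^sup>2 = 1" and S: "sym2 a b c = rot_diag x y (eig_max a b c) (eig_min a b c)"
    by (rule sym2_spectral)
  obtain \<beta> \<gamma> where bg: "eig_max a b c powr t = \<beta> * eig_max a b c + \<gamma>"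
    "eig_min a b c powr t = \<beta> * eig_min a b c + \<gamma>"
    using affine_interpolant_exists[of "\<lambda>x. x powr t"] by blast
  have pos: "0 < eig_min a b c" "0 < eig_max a b c"
    using eig_min_pos[OF assms] eig_min_le_max[of a b c] by linarith+
  have "mpow 2 (sym2 a b c) t = rot_diag x y (eig_max a b c powr t) (eig_min a b c powr t)"
    unfolding S using xy pos by (simp add: mpow_rot_diag)
  also have "\<dots> = complex_of_real \<beta> \<cdot>\<^sub>m sym2 a b c + complex_of_real \<gamma> \<cdot>\<^sub>m 1\<^sub>m 2"
    unfolding S rot_diag_def
    by (rule unitary_conj_affine[OF unitary_rot[OF xy]]) (use bg in \<open>auto simp: less_two_iff\<close>)
  finally show ?thesis using that bg unfolding sym2_affine by blast
qed

lemma eigs_mpow_sym2: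
  assumes "0 < a" "b\<^sup>2 < a * c" "0 < t"
  shows "eigs 2 (mpow 2 (sym2 a b c) t) = [eig_max a b c powr t, eig_min a b c powr t]"
proof -
  obtain x y where xy: "x\<^sup>2 + y\<^sup>2 = 1" and S: "sym2 a b c = rot_diag x y (eig_max a b c) (eig_min a b c)"
    by (rule sym2_spectral)
  have pos: "0 < eig_min a b c" "0 < eig_max a b c"
    using eig_min_pos[OF assms(1,2)] eig_min_le_max[of a b c] by linarith+
  have "eig_min a b c powr t \<le> eig_max a b c powr t"
    using pos assms(3) eig_min_le_max by (simp add: powr_mono2)
  then show ?thesis unfolding S using xy pos by (simp add: mpow_rot_diag eigs_rot_diag)
qed

section \<open>Weighted geometric mean with a diagonal matrix\<close>

lemma affine_sym2_det_powr:
  assumes a: "0 < a" and d: "b\<^sup>2 < a * c"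
    and l1: "eig_max a b c powr t = \<beta> * eig_max a b c + \<gamma>"
    and l2: "eig_min a b c powr t = \<beta> * eig_min a b c + \<gamma>"
  shows "(\<beta> * a + \<gamma>) * (\<beta> * c + \<gamma>) - (\<beta> * b)\<^sup>2 = (a * c - b\<^sup>2) powr t"
proof -
  have "(\<beta> * a + \<gamma>) * (\<beta> * c + \<gamma>) - (\<beta> * b)\<^sup>2
      = \<beta>\<^sup>2 * (eig_max a b c * eig_min a b c) + \<beta> * \<gamma> * (eig_max a b c + eig_min a b c) + \<gamma>\<^sup>2"
    unfolding eig_max_times_min eig_max_plus_min by (simp add: power2_eq_square algebra_simps)
  also have "\<dots> = (\<beta> * eig_max a b c + \<gamma>) * (\<beta> * eig_min a b c + \<gamma>)"
    by (simp add: power2_eq_square algebra_simps)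
  also have "\<dots> = (eig_max a b c * eig_min a b c) powr t"
    unfolding l1[symmetric] l2[symmetric]
    using eig_min_pos[OF a d] eig_min_le_max[of a b c] by (simp add: powr_mult)
  finally show ?thesis unfolding eig_max_times_min .
qed

lemma congruence_inv_sqrt_sym2:
  assumes u: "0 < u" and v: "0 < v"
  shows "mpow 2 (sym2 u 0 v) (-1/2) * sym2 a b c * mpow 2 (sym2 u 0 v) (-1/2)
    = sym2 (a / u) (b / sqrt (u * v)) (c / v)"
proof -
  have inv_sqrt: "x powr (-1/2) = 1 / sqrt x" if "0 < x" for x :: real
    using that by (simp add: powr_minus_divide powr_half_sqrt)
  show ?thesis
    unfolding mpow_sym2_diag[OF u v] inv_sqrt[OF u] inv_sqrt[OF v] sym2_congruence_diag
    using u v by (simp add: real_sqrt_mult field_simps)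
qed

lemma gmean_diag_sym2:
  assumes u: "0 < u" and v: "0 < v" and a: "0 < a" and d: "b\<^sup>2 < a * c"
  defines "a' \<equiv> a / u" and "b' \<equiv> b / sqrt (u * v)" and "c' \<equiv> c / v"
  obtains \<beta> \<gamma> where "gmean 2 \<alpha> (sym2 u 0 v) (sym2 a b c) = sym2 (\<beta> * a + \<gamma> * u) (\<beta> * b) (\<beta> * c + \<gamma> * v)"
    "eig_max a' b' c' powr \<alpha> = \<beta> * eig_max a' b' c' + \<gamma>"
    "eig_min a' b' c' powr \<alpha> = \<beta> * eig_min a' b' c' + \<gamma>"
    "(\<beta> * a + \<gamma> * u) * (\<beta> * c + \<gamma> * v) - (\<beta> * b)\<^sup>2 = (u * v) powr (1 - \<alpha>) * (a * c - b\<^sup>2) powr \<alpha>"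
proof -
  define ru rv where "ru = sqrt u" and "rv = sqrt v"
  have r: "0 < ru" "0 < rv" "ru * ru = u" "rv * rv = v" "ru * rv = sqrt (u * v)"
    using u v by (simp_all add: ru_def rv_def real_sqrt_mult)
  have "mpow 2 (sym2 u 0 v) (-1/2) * sym2 a b c * mpow 2 (sym2 u 0 v) (-1/2) = sym2 a' b' c'"
    unfolding a'_def b'_def c'_def by (rule congruence_inv_sqrt_sym2[OF u v])
  moreover have a': "0 < a'" and d': "b'\<^sup>2 < a' * c'"
    using u v a d
    by (simp_all add: a'_def b'_def c'_def power_divide power_mult_distrib divide_strict_right_mono)
  obtain \<beta> \<gamma> where M: "mpow 2 (sym2 a' b' c') \<alpha> = sym2 (\<beta> * a' + \<gamma>) (\<beta> * b') (\<beta> * c' + \<gamma>)"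
    and l1: "eig_max a' b' c' powr \<alpha> = \<beta> * eig_max a' b' c' + \<gamma>"
    and l2: "eig_min a' b' c' powr \<alpha> = \<beta> * eig_min a' b' c' + \<gamma>"
    by (rule mpow_sym2_affine[OF a' d'])
  have "mpow 2 (sym2 u 0 v) (1/2) = sym2 ru 0 rv"
    using u v by (simp add: mpow_sym2_diag powr_half_sqrt ru_def rv_def)
  ultimately have "gmean 2 \<alpha> (sym2 u 0 v) (sym2 a b c)
      = sym2 ru 0 rv * sym2 (\<beta> * a' + \<gamma>) (\<beta> * b') (\<beta> * c' + \<gamma>) * sym2 ru 0 rv"
    unfolding gmean_def by (simp add: M)
  also have "\<dots> = sym2 (\<beta> * a + \<gamma> * u) (\<beta> * b) (\<beta> * c + \<gamma> * v)"
  proof -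
    have "ru * ru * (\<beta> * a' + \<gamma>) = \<beta> * a + \<gamma> * u" "ru * rv * (\<beta> * b') = \<beta> * b"
      "rv * rv * (\<beta> * c' + \<gamma>) = \<beta> * c + \<gamma> * v"
      using r u v by (simp_all add: a'_def b'_def c'_def field_simps)
    then show ?thesis unfolding sym2_congruence_diag by (simp only:)
  qed
  finally have G: "gmean 2 \<alpha> (sym2 u 0 v) (sym2 a b c) = sym2 (\<beta> * a + \<gamma> * u) (\<beta> * b) (\<beta> * c + \<gamma> * v)" .
  have "(\<beta> * a + \<gamma> * u) * (\<beta> * c + \<gamma> * v) - (\<beta> * b)\<^sup>2
      = (u * v) * ((\<beta> * a' + \<gamma>) * (\<beta> * c' + \<gamma>) - (\<beta> * b')\<^sup>2)"
    using u v by (simp add: a'_def b'_def c'_def power2_eq_square field_simps real_sqrt_mult)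
  also have "\<dots> = (u * v) * (a' * c' - b'\<^sup>2) powr \<alpha>"
    unfolding affine_sym2_det_powr[OF a' d' l1 l2] ..
  also have "\<dots> = (u * v) powr (1 - \<alpha>) * (a * c - b\<^sup>2) powr \<alpha>"
    using u v d
    by (simp add: a'_def b'_def c'_def power_divide real_sqrt_mult field_simps powr_divide powr_diff)
  finally show ?thesis using that G l1 l2 by blast
qed

section \<open>The test matrices\<close>

definition silver_sq :: real where
  "silver_sq = 3 + 2 * sqrt 2"

lemma silver_sq_gt_1: "1 < silver_sq"
  using real_sqrt_ge_zero[of 2] unfolding silver_sq_def by linarith

lemma eig_max_min_silver:
  assumes tr: "a + c = 6" and det: "a * c - b\<^sup>2 = 1"
  shows "eig_max a b c = silver_sq" and "eig_min a b c = 1 / silver_sq"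
proof -
  have "((a - c) / 2)\<^sup>2 + b\<^sup>2 = ((a + c) / 2)\<^sup>2 - (a * c - b\<^sup>2)"
    by (simp add: power2_eq_square field_simps)
  also have "\<dots> = 8" unfolding tr det by simp
  finally show max: "eig_max a b c = silver_sq"
    using real_sqrt_mult[of 4 2] unfolding eig_max_def silver_sq_def tr by simp
  show "eig_min a b c = 1 / silver_sq"
    using eig_max_times_min[of a b c] silver_sq_gt_1 unfolding det max by (simp add: field_simps)
qed

definition chord_at_one :: "real \<Rightarrow> real" where
  "chord_at_one \<alpha> = (silver_sq powr \<alpha> - (1 / silver_sq) powr \<alpha>) / (silver_sq - 1 / silver_sq)
     * (1 - silver_sq) + silver_sq powr \<alpha>"

lemma affine_through_silver_at_one:
  assumes "silver_sq powr \<alpha> = \<beta> * silver_sq + \<gamma>"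
    and "(1 / silver_sq) powr \<alpha> = \<beta> * (1 / silver_sq) + \<gamma>"
  shows "\<beta> + \<gamma> = chord_at_one \<alpha>"
proof -
  have "1 / silver_sq < 1" using silver_sq_gt_1 by simp
  then have "silver_sq \<noteq> 1 / silver_sq" using silver_sq_gt_1 by linarith
  then show ?thesis
    using affine_interpolant_eval[of "\<lambda>t. t powr \<alpha>", OF assms, of 1] unfolding chord_at_one_def by simp
qed

text \<open>The chord of the strictly concave function \<open>t powr \<alpha>\<close> through \<open>1 / silver_sq\<close> and
  \<open>silver_sq\<close> lies strictly below the graph at \<open>t = 1\<close>.\<close>
lemma chord_at_one_bounds:
  assumes "0 < \<alpha>" "\<alpha> < 1"
  shows "0 < chord_at_one \<alpha>" "chord_at_one \<alpha> < 1"
proof -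
  let ?L = silver_sq
  define w where "w = ?L powr \<alpha>"
  have L: "1 < ?L" by (rule silver_sq_gt_1)
  have w: "1 < w" "w < ?L"
    unfolding w_def using L assms powr_less_mono[of \<alpha> 1 ?L] by auto
  have "(1 / ?L) powr \<alpha> = 1 / w" unfolding w_def using L by (simp add: powr_divide)
  then have "chord_at_one \<alpha> = (w - 1 / w) / (?L - 1 / ?L) * (1 - ?L) + w"
    unfolding chord_at_one_def w_def by simp
  also have "\<dots> = (w + ?L / w) / (?L + 1)"
  proof -
    have "1 < ?L * ?L" using L less_1_mult by blast
    moreover have "0 < w + ?L * w" using L w by (intro add_pos_pos mult_pos_pos) auto
    ultimately show ?thesis using L w by (simp add: field_simps)
  qed
  finally have chord: "chord_at_one \<alpha> = (w + ?L / w) / (?L + 1)" .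
  have "0 < w + ?L / w" using L w by (intro add_pos_pos divide_pos_pos) auto
  then show "0 < chord_at_one \<alpha>" unfolding chord using L by simp
  have "(w - 1) * (w - ?L) < 0" using w by (simp add: mult_pos_neg)
  then have "w * w + ?L < (?L + 1) * w" by (simp add: algebra_simps)
  then have "w + ?L / w < ?L + 1" using w by (simp add: field_simps)
  then show "chord_at_one \<alpha> < 1" unfolding chord using L by simp
qed

text \<open>\<open>tilt N\<close> is the sine of the rotation angle. Since \<open>tilt N * (N - 1 / N) = 2\<close>, the matrix
  \<open>A^(-p/2) B^p A^(-p/2)\<close> for the test matrices below has trace 6 and determinant 1 for every
  \<open>N\<close>, hence the eigenvalues \<open>silver_sq\<close> and \<open>1 / silver_sq\<close>.\<close>
definition tilt :: "real \<Rightarrow> real" where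
  "tilt N = 2 * N / (N\<^sup>2 - 1)"

lemma tilt_props:
  assumes "3 \<le> N"
  shows "0 < tilt N" "tilt N < 1" "tilt N * (N - 1 / N) = 2" "(sqrt (1 - (tilt N)\<^sup>2))\<^sup>2 + (tilt N)\<^sup>2 = 1"
proof -
  have "4 \<le> (N - 1)\<^sup>2" using power_mono[of 2 "N - 1" 2] assms by simp
  then have N: "2 * N < N\<^sup>2 - 1" by (simp add: power2_eq_square algebra_simps)
  show t0: "0 < tilt N" and t1: "tilt N < 1" unfolding tilt_def using N assms by simp_all
  show "tilt N * (N - 1 / N) = 2"
    unfolding tilt_def using N assms by (simp add: field_simps power2_eq_square)
  have "(tilt N)\<^sup>2 \<le> 1" using t0 t1 by (simp add: abs_square_le_1)
  then show "(sqrt (1 - (tilt N)\<^sup>2))\<^sup>2 + (tilt N)\<^sup>2 = 1" by simp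
qed

lemma tilted_quotient_trace:
  fixes x y N :: real
  assumes xy: "x\<^sup>2 + y\<^sup>2 = 1" and yN: "y * (N - 1 / N) = 2" and N: "0 < N"
  shows "(x\<^sup>2 * N + y\<^sup>2 * (1 / N)) / N + (y\<^sup>2 * N + x\<^sup>2 * (1 / N)) / (1 / N) = 6"
proof -
  have "(x\<^sup>2 * N + y\<^sup>2 * (1 / N)) / N + (y\<^sup>2 * N + x\<^sup>2 * (1 / N)) / (1 / N)
      = 2 * x\<^sup>2 + (y * (N - 1 / N))\<^sup>2 + 2 * y\<^sup>2"
    using N by (simp add: field_simps power2_eq_square)
  then show ?thesis using xy yN by simp
qed

lemma gmean_tilted_pair:
  assumes xy: "x\<^sup>2 + y\<^sup>2 = 1" and yN: "y * (N - 1 / N) = 2" and N: "0 < N"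
  obtains a b c where "gmean 2 \<alpha> (sym2 N 0 (1 / N)) (rot_diag x y N (1 / N)) = sym2 a b c"
    "a * c - b\<^sup>2 = 1" "a + c = chord_at_one \<alpha> * (N + 1 / N)"
proof -
  define aB bB cB where "aB = x\<^sup>2 * N + y\<^sup>2 * (1 / N)" and "bB = x * y * (N - 1 / N)"
    and "cB = y\<^sup>2 * N + x\<^sup>2 * (1 / N)"
  have B: "rot_diag x y N (1 / N) = sym2 aB bB cB"
    unfolding rot_diag_eq_sym2 aB_def bB_def cB_def ..
  have trB: "aB + cB = N + 1 / N" and detB: "aB * cB - bB\<^sup>2 = 1"
    using rot_diag_trace_det[OF xy, of N "1 / N"] N unfolding aB_def bB_def cB_def by simp_all
  have aB: "0 < aB" and dB: "bB\<^sup>2 < aB * cB"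
    using rot_diag_posdef_entries[OF xy N, of "1 / N"] N unfolding aB_def bB_def cB_def by simp_all
  define a' b' c' where "a' = aB / N" and "b' = bB / sqrt (N * (1 / N))" and "c' = cB / (1 / N)"
  obtain \<beta> \<gamma> where G: "gmean 2 \<alpha> (sym2 N 0 (1 / N)) (sym2 aB bB cB)
      = sym2 (\<beta> * aB + \<gamma> * N) (\<beta> * bB) (\<beta> * cB + \<gamma> * (1 / N))"
    and l1: "eig_max a' b' c' powr \<alpha> = \<beta> * eig_max a' b' c' + \<gamma>"
    and l2: "eig_min a' b' c' powr \<alpha> = \<beta> * eig_min a' b' c' + \<gamma>"
    and detG: "(\<beta> * aB + \<gamma> * N) * (\<beta> * cB + \<gamma> * (1 / N)) - (\<beta> * bB)\<^sup>2
      = (N * (1 / N)) powr (1 - \<alpha>) * (aB * cB - bB\<^sup>2) powr \<alpha>"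
    using gmean_diag_sym2[OF N _ aB dB, of "1 / N"] N unfolding a'_def b'_def c'_def by auto
  have detM: "a' * c' - b'\<^sup>2 = 1"
    using detB N unfolding a'_def b'_def c'_def by simp
  have trM: "a' + c' = 6"
    unfolding a'_def c'_def aB_def cB_def by (rule tilted_quotient_trace[OF xy yN N])
  have chord: "\<beta> + \<gamma> = chord_at_one \<alpha>"
    using l1 l2 unfolding eig_max_min_silver[OF trM detM] by (rule affine_through_silver_at_one)
  have "(\<beta> * aB + \<gamma> * N) + (\<beta> * cB + \<gamma> * (1 / N)) = \<beta> * (aB + cB) + \<gamma> * (N + 1 / N)"
    by (simp add: algebra_simps)
  also have "\<dots> = (\<beta> + \<gamma>) * (N + 1 / N)"
    unfolding trB by (simp add: algebra_simps add_divide_distrib)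
  finally have "(\<beta> * aB + \<gamma> * N) + (\<beta> * cB + \<gamma> * (1 / N)) = chord_at_one \<alpha> * (N + 1 / N)"
    unfolding chord .
  moreover have "(\<beta> * aB + \<gamma> * N) * (\<beta> * cB + \<gamma> * (1 / N)) - (\<beta> * bB)\<^sup>2 = 1"
    using detG detB N by simp
  ultimately show ?thesis using that G B by metis
qed

lemma tilted_mix_det:
  fixes \<alpha> x y Q z :: real
  assumes xy: "x\<^sup>2 + y\<^sup>2 = 1" and Qz: "Q * z = 1"
  shows "((1 - \<alpha>) * Q + \<alpha> * (x\<^sup>2 * Q + y\<^sup>2 * z)) * ((1 - \<alpha>) * z + \<alpha> * (y\<^sup>2 * Q + x\<^sup>2 * z))
      - (\<alpha> * (x * y * (Q - z)))\<^sup>2 = 1 + \<alpha> * (1 - \<alpha>) * y\<^sup>2 * (Q - z)\<^sup>2"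
proof -
  have x2: "x\<^sup>2 = 1 - y\<^sup>2" using xy by simp
  have "((1 - \<alpha>) * Q + \<alpha> * (x\<^sup>2 * Q + y\<^sup>2 * z)) * ((1 - \<alpha>) * z + \<alpha> * (y\<^sup>2 * Q + x\<^sup>2 * z))
      - (\<alpha> * (x * y * (Q - z)))\<^sup>2
      = (1 - \<alpha>)\<^sup>2 * (Q * z) + \<alpha> * (1 - \<alpha>) * (y\<^sup>2 * (Q\<^sup>2 + z\<^sup>2) + 2 * x\<^sup>2 * (Q * z))
        + \<alpha>\<^sup>2 * (Q * z) * (x\<^sup>2 + y\<^sup>2)\<^sup>2"
    by (simp add: algebra_simps power2_eq_square)
  also have "\<dots> = (1 - \<alpha>)\<^sup>2 + \<alpha> * (1 - \<alpha>) * (y\<^sup>2 * (Q\<^sup>2 + z\<^sup>2) + 2 * (1 - y\<^sup>2)) + \<alpha>\<^sup>2"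
    unfolding Qz xy x2 by simp
  also have "\<dots> = 1 + \<alpha> * (1 - \<alpha>) * y\<^sup>2 * (Q\<^sup>2 + z\<^sup>2 - 2 * (Q * z))"
    unfolding Qz by (simp add: algebra_simps power2_eq_square)
  also have "\<dots> = 1 + \<alpha> * (1 - \<alpha>) * y\<^sup>2 * (Q - z)\<^sup>2"
    by (simp add: algebra_simps power2_eq_square)
  finally show ?thesis .
qed

lemma mix_tilted_pair:
  assumes \<alpha>: "0 < \<alpha>" "\<alpha> < 1" and xy: "x\<^sup>2 + y\<^sup>2 = 1" and y: "y\<^sup>2 < 1" and Q: "1 \<le> Q"
  obtains a b c
  where "complex_of_real (1 - \<alpha>) \<cdot>\<^sub>m sym2 Q 0 (1 / Q)
      + complex_of_real \<alpha> \<cdot>\<^sub>m rot_diag x y Q (1 / Q) = sym2 a b c"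
    "0 < a" "b\<^sup>2 < a * c" "eig_min a b c \<le> (1 + y\<^sup>2 * Q\<^sup>2) / ((1 - y\<^sup>2) * Q)"
proof -
  define z where "z = 1 / Q"
  have z: "0 < z" "z \<le> 1" "Q * z = 1" using Q unfolding z_def by simp_all
  define a b c where "a = (1 - \<alpha>) * Q + \<alpha> * (x\<^sup>2 * Q + y\<^sup>2 * z)" and "b = \<alpha> * (x * y * (Q - z))"
    and "c = (1 - \<alpha>) * z + \<alpha> * (y\<^sup>2 * Q + x\<^sup>2 * z)"
  have X: "complex_of_real (1 - \<alpha>) \<cdot>\<^sub>m sym2 Q 0 (1 / Q)
      + complex_of_real \<alpha> \<cdot>\<^sub>m rot_diag x y Q (1 / Q) = sym2 a b c"
    unfolding rot_diag_eq_sym2 sym2_add_smult a_def b_def c_def z_def by simp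
  have det: "a * c - b\<^sup>2 = 1 + \<alpha> * (1 - \<alpha>) * y\<^sup>2 * (Q - z)\<^sup>2"
    unfolding a_def b_def c_def by (rule tilted_mix_det[OF xy z(3)])
  have x2: "x\<^sup>2 = 1 - y\<^sup>2" using xy by simp
  have "a = Q - \<alpha> * (y\<^sup>2 * Q) + \<alpha> * (y\<^sup>2 * z)"
    unfolding a_def x2 by (simp add: algebra_simps)
  moreover have "\<alpha> * (y\<^sup>2 * Q) \<le> 1 * (y\<^sup>2 * Q)" using \<alpha> Q by (intro mult_right_mono) auto
  moreover have "0 \<le> \<alpha> * (y\<^sup>2 * z)" using \<alpha> z by simp
  moreover have "(1 - y\<^sup>2) * Q = Q - y\<^sup>2 * Q" by (simp add: algebra_simps)
  ultimately have a_ge: "(1 - y\<^sup>2) * Q \<le> a" by linarith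
  have "0 < (1 - y\<^sup>2) * Q" using y Q by simp
  then have a: "0 < a" using a_ge by linarith
  have "0 \<le> \<alpha> * (1 - \<alpha>) * y\<^sup>2 * (Q - z)\<^sup>2" using \<alpha> by simp
  then have d: "b\<^sup>2 < a * c" using det by simp
  have "(Q - z)\<^sup>2 \<le> Q\<^sup>2" using z Q by (intro power_mono) auto
  moreover have "\<alpha> * (1 - \<alpha>) \<le> 1" using \<alpha> by (intro mult_le_one) auto
  ultimately have "\<alpha> * (1 - \<alpha>) * y\<^sup>2 * (Q - z)\<^sup>2 \<le> 1 * y\<^sup>2 * Q\<^sup>2"
    using \<alpha> by (intro mult_mono mult_right_mono) auto
  then have "a * c - b\<^sup>2 \<le> 1 + y\<^sup>2 * Q\<^sup>2" unfolding det by simp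
  then have "eig_min a b c \<le> (1 + y\<^sup>2 * Q\<^sup>2) / ((1 - y\<^sup>2) * Q)"
    using eig_min_le_of_bounds[OF _ a_ge d] y Q by simp
  then show ?thesis using that X a d by blast
qed

definition test_A :: "real \<Rightarrow> real \<Rightarrow> complex mat" where
  "test_A p N = sym2 (N powr (1 / p)) 0 (1 / N powr (1 / p))"

definition test_B :: "real \<Rightarrow> real \<Rightarrow> complex mat" where
  "test_B p N = rot_diag (sqrt (1 - (tilt N)\<^sup>2)) (tilt N) (N powr (1 / p)) (1 / N powr (1 / p))"

lemma mpow_test_A:
  assumes "0 < N"
  shows "mpow 2 (test_A p N) t = sym2 (N powr (t / p)) 0 (1 / N powr (t / p))"
  unfolding test_A_def using assms by (simp add: mpow_sym2_diag powr_divide powr_powr)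

lemma mpow_test_B:
  assumes "3 \<le> N"
  shows "mpow 2 (test_B p N) t
    = rot_diag (sqrt (1 - (tilt N)\<^sup>2)) (tilt N) (N powr (t / p)) (1 / N powr (t / p))"
  unfolding test_B_def using assms tilt_props(4)[OF assms] by (simp add: mpow_rot_diag powr_divide powr_powr)

lemma posdef_test_A: "0 < N \<Longrightarrow> posdef 2 (test_A p N)"
  unfolding test_A_def by (rule posdef_sym2) simp_all

lemma posdef_test_B: "3 \<le> N \<Longrightarrow> posdef 2 (test_B p N)"
  unfolding test_B_def by (rule posdef_rot_diag) (simp_all add: tilt_props(4))

lemma eig_min_G_ap_test:
  assumes \<alpha>: "0 < \<alpha>" "\<alpha> < 1" and p: "0 < p" and N: "3 \<le> N"
  shows "(1 / (chord_at_one \<alpha> * (N + 1 / N))) powr (1 / p) \<le> eigs 2 (G_ap 2 \<alpha> p (test_A p N) (test_B p N)) ! 1"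
proof -
  have N0: "0 < N" using N by simp
  obtain a b c
    where G: "gmean 2 \<alpha> (sym2 N 0 (1 / N)) (rot_diag (sqrt (1 - (tilt N)\<^sup>2)) (tilt N) N (1 / N))
      = sym2 a b c"
    and det: "a * c - b\<^sup>2 = 1" and tr: "a + c = chord_at_one \<alpha> * (N + 1 / N)"
    using gmean_tilted_pair[OF tilt_props(4,3)[OF N] N0] by blast
  have "0 < N + 1 / N" using N0 by (simp add: add_pos_pos)
  then have tr0: "0 < a + c" using tr chord_at_one_bounds[OF \<alpha>] by simp
  have d: "b\<^sup>2 < a * c" using det by simp
  then have "0 < a * c" by (meson le_less_trans zero_le_power2)
  then have a: "0 < a" using tr0 by (auto simp: zero_less_mult_iff)
  have "G_ap 2 \<alpha> p (test_A p N) (test_B p N) = mpow 2 (sym2 a b c) (1 / p)"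
    unfolding G_ap_def mpow_test_A[OF N0] mpow_test_B[OF N] using p G N0 by simp
  then have "eigs 2 (G_ap 2 \<alpha> p (test_A p N) (test_B p N)) ! 1 = eig_min a b c powr (1 / p)"
    using eigs_mpow_sym2[OF a d] p by simp
  moreover have "1 / (chord_at_one \<alpha> * (N + 1 / N)) \<le> eig_min a b c"
    using eig_min_ge[OF a d] unfolding det tr .
  ultimately show ?thesis using tr0 tr p by (simp add: powr_mono2)
qed

lemma eig_min_A_aq_test:
  assumes \<alpha>: "0 < \<alpha>" "\<alpha> < 1" and p: "0 < p" and q: "0 < q" and N: "3 \<le> N"
  shows "eigs 2 (A_aq 2 \<alpha> q (test_A p N) (test_B p N)) ! 1
    \<le> ((1 + (tilt N)\<^sup>2 * (N powr (q / p))\<^sup>2) / ((1 - (tilt N)\<^sup>2) * N powr (q / p))) powr (1 / q)"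
proof -
  have N0: "0 < N" using N by simp
  have y: "(tilt N)\<^sup>2 < 1" using tilt_props(1,2)[OF N] by (simp add: abs_square_less_1)
  have Q: "1 \<le> N powr (q / p)" using N p q by (simp add: ge_one_powr_ge_zero)
  obtain a b c where X: "complex_of_real (1 - \<alpha>) \<cdot>\<^sub>m sym2 (N powr (q / p)) 0 (1 / N powr (q / p))
      + complex_of_real \<alpha> \<cdot>\<^sub>m
          rot_diag (sqrt (1 - (tilt N)\<^sup>2)) (tilt N) (N powr (q / p)) (1 / N powr (q / p))
      = sym2 a b c"
    and a: "0 < a" and d: "b\<^sup>2 < a * c"
    and bound: "eig_min a b c \<le> (1 + (tilt N)\<^sup>2 * (N powr (q / p))\<^sup>2) / ((1 - (tilt N)\<^sup>2) * N powr (q / p))"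
    using mix_tilted_pair[OF \<alpha> tilt_props(4)[OF N] y Q] by blast
  have "A_aq 2 \<alpha> q (test_A p N) (test_B p N) = mpow 2 (sym2 a b c) (1 / q)"
    unfolding A_aq_def mpow_test_A[OF N0] mpow_test_B[OF N] X ..
  then have "eigs 2 (A_aq 2 \<alpha> q (test_A p N) (test_B p N)) ! 1 = eig_min a b c powr (1 / q)"
    using eigs_mpow_sym2[OF a d] q by simp
  then show ?thesis using bound eig_min_pos[OF a d] q by (simp add: powr_mono2)
qed

lemma eventually_tilt_product_less_1:
  assumes H: "0 < H" "H < 1" and pq: "0 < q" "q < p"
  shows "\<forall>\<^sub>F N in at_top. ((1 + (tilt N)\<^sup>2 * (N powr (q / p))\<^sup>2) / (1 - (tilt N)\<^sup>2)) powr (1 / q)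
    * (H * (1 + 1 / N\<^sup>2)) powr (1 / p) < 1"
proof -
  define r where "r = q / p"
  have "0 < r" "r < 1" using pq unfolding r_def by simp_all
  then have "((\<lambda>N. (1 + (tilt N)\<^sup>2 * (N powr r)\<^sup>2) / (1 - (tilt N)\<^sup>2)) \<longlongrightarrow> 1) at_top"
    unfolding tilt_def by real_asymp
  moreover have "((\<lambda>N. H * (1 + 1 / N\<^sup>2)) \<longlongrightarrow> H) at_top"
    by real_asymp
  ultimately have "((\<lambda>N. ((1 + (tilt N)\<^sup>2 * (N powr r)\<^sup>2) / (1 - (tilt N)\<^sup>2)) powr (1 / q)
      * (H * (1 + 1 / N\<^sup>2)) powr (1 / p)) \<longlongrightarrow> 1 powr (1 / q) * H powr (1 / p)) at_top"
    using H by (intro tendsto_intros) auto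
  moreover have "1 powr (1 / q) * H powr (1 / p) < 1"
    using powr_less_mono2[of "1 / p" H 1] H pq by simp
  ultimately show ?thesis unfolding r_def by (rule order_tendstoD(2))
qed

lemma eventually_test_gap:
  assumes H: "0 < H" "H < 1" and pq: "0 < q" "q < p"
  shows "\<forall>\<^sub>F N in at_top.
    ((1 + (tilt N)\<^sup>2 * (N powr (q / p))\<^sup>2) / ((1 - (tilt N)\<^sup>2) * N powr (q / p))) powr (1 / q)
      < (1 / (H * (N + 1 / N))) powr (1 / p)"
  using eventually_tilt_product_less_1[OF assms] eventually_ge_at_top[of 3]
proof eventually_elim
  case (elim N)
  define F where "F = (1 + (tilt N)\<^sup>2 * (N powr (q / p))\<^sup>2) / (1 - (tilt N)\<^sup>2)"
  define K where "K = (H * (1 + 1 / N\<^sup>2)) powr (1 / p)"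
  have N: "0 < N" using elim(2) by simp
  have F: "0 < F"
    unfolding F_def using tilt_props(1,2)[OF elim(2)] by (simp add: abs_square_less_1 add_pos_nonneg)
  have "0 < 1 + 1 / N\<^sup>2" by (simp add: add_pos_nonneg)
  then have K: "0 < K" unfolding K_def using H by simp
  have n: "0 < N powr (1 / p)" using N by simp
  have "((1 + (tilt N)\<^sup>2 * (N powr (q / p))\<^sup>2) / ((1 - (tilt N)\<^sup>2) * N powr (q / p))) powr (1 / q)
      = (F / N powr (q / p)) powr (1 / q)"
    unfolding F_def by (simp add: divide_divide_eq_left)
  also have "\<dots> = F powr (1 / q) / N powr (1 / p)"
    using F N pq by (simp add: powr_divide powr_powr)
  also have "\<dots> < 1 / (K * N powr (1 / p))"
    using elim(1) K n unfolding F_def[symmetric] K_def[symmetric] by (simp add: field_simps)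
  also have "\<dots> = (1 / (H * (N + 1 / N))) powr (1 / p)"
  proof -
    have "H * (N + 1 / N) = H * (1 + 1 / N\<^sup>2) * N" using N by (simp add: field_simps power2_eq_square)
    then show ?thesis unfolding K_def using H N by (simp add: powr_divide powr_mult add_pos_nonneg)
  qed
  finally show ?case .
qed

theorem theorem4p20:
  fixes \<alpha> p q :: real
  assumes "0 < \<alpha>" and "\<alpha> < 1" and "0 < p" and "0 < q"
    and "\<forall>A B. posdef 2 A \<longrightarrow> posdef 2 B \<longrightarrow> eig_le 2 (G_ap 2 \<alpha> p A B) (A_aq 2 \<alpha> q A B)"
  shows "p \<le> q"
proof (rule ccontr)
  assume "\<not> p \<le> q"
  then have "q < p" by simp
  then have "\<forall>\<^sub>F N in at_top. 3 \<le> N \<and>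
      ((1 + (tilt N)\<^sup>2 * (N powr (q / p))\<^sup>2) / ((1 - (tilt N)\<^sup>2) * N powr (q / p))) powr (1 / q)
      < (1 / (chord_at_one \<alpha> * (N + 1 / N))) powr (1 / p)"
    by (intro eventually_conj eventually_ge_at_top eventually_test_gap chord_at_one_bounds assms(1,2,4))
  then obtain N where N: "3 \<le> N" and gap:
      "((1 + (tilt N)\<^sup>2 * (N powr (q / p))\<^sup>2) / ((1 - (tilt N)\<^sup>2) * N powr (q / p))) powr (1 / q)
      < (1 / (chord_at_one \<alpha> * (N + 1 / N))) powr (1 / p)"
    by (auto simp: eventually_at_top_linorder)
  have "eig_le 2 (G_ap 2 \<alpha> p (test_A p N) (test_B p N)) (A_aq 2 \<alpha> q (test_A p N) (test_B p N))"
    using assms(5) posdef_test_A posdef_test_B N by simp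
  then have "eigs 2 (G_ap 2 \<alpha> p (test_A p N) (test_B p N)) ! 1
      \<le> eigs 2 (A_aq 2 \<alpha> q (test_A p N) (test_B p N)) ! 1"
    unfolding eig_le_def by simp
  then show False
    using eig_min_G_ap_test[OF assms(1-3) N] eig_min_A_aq_test[OF assms(1-4) N] gap by linarith
qed

end
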